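(* Assume the setting below, and that every nonempty intersection $\bigcap_{v\in A}Z_v\cap\bigcap_{\rho\in B}W_\rho$ ($\emptyset\neq A\subseteq V_f$, $B\subseteq V_\infty$) is irreducible. Let $\tau$ be a cell and let $f_\tau\in\operatorname{Rat}(X)$ satisfy: (i) $\operatorname{trop}(f_\tau)\equiv0$ on $\Theta_\tau$; (ii) $\operatorname{trop}(f_\tau)>0$ on $\Theta_\eta\setminus\Theta_\tau$ for every cell $\eta$; (iii) for every cell $\eta$, $\operatorname{trop}(f_\tau)|_{\Theta_\eta}$ is concave and its slope near infinity along every ray $\{u+te_\rho\}\subseteq\Theta_\eta$ with $\rho\in B_\eta\setminus B_\tau$ is positive. Then for every cell $\eta$ and every half-line $\{p+tw:t\ge0\}\subseteq\Theta_\eta$ with $w\in\mathbb R^{B_\eta}_{\ge0}$ having $w_\rho>0$ for some $\rho\in B_\eta\setminus B_\tau$ (i.e. a half-line of $\Theta_\eta$ not parallel to $\Theta_\tau$), the slope near infinity of $\operatorname{trop}(f_\tau)$ along this half-line is positive.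
   Context: Setting. Let $K$ be a complete discretely valued field with valuation $\nu_K\colon K\to\mathbb Z\cup\{\infty\}$, valuation ring $R$, uniformizer $\varpi$ with $\nu_K(\varpi)=1$, residue field $\kappa$, and absolute value $|a|=\exp(-\nu_K(a))$. Let $X$ be a smooth projective geometrically connected variety of dimension $d$ over $K$. A strictly semistable pair of $X$ is a pair $(\mathscr X,\mathcal H)$ where $\mathscr X$ is an integral projective flat $R$-scheme with an isomorphism $\mathscr X\times_R K\cong X$, $\mathcal H=\sum_{\rho\in V_\infty}W_\rho$ is a sum of pairwise distinct irreducible hypersurfaces $W_\rho$ of $\mathscr X$, and $\mathscr X$ is covered by open subsets $\mathcal U$ admitting étale morphisms $\psi\colon\mathcal U\to\operatorname{Spec}R[x_0,\dots,x_d]/(x_0\cdots x_r-\varpi)$ ($0\le r\le d$) such that each $W_\rho\cap\mathcal U$ is empty or is defined by $\psi^*(x_j)$ for some $r+1\le j\le d$. Let $Z_v$, $v\in V_f$, be the irreducible components of the special fiber $\mathscr X_\kappa$. Strata and dual complex. Under the irreducibility assumption of the claim, the cells $\tau$ of the dual complex $\Delta(\mathscr X,\mathcal H)$ correspond to the pairs $(A_\tau,B_\tau)$ with $\emptyset\ne A_\tau\subseteq V_f$, $B_\tau\subseteq V_\infty$ and $S_\tau:=\bigcap_{v\in A_\tau}Z_v\cap\bigcap_{\rho\in B_\tau}W_\rho\neq\emptyset$; let $\xi_\tau$ be the generic point of $S_\tau$. To $\tau$ is attached $\Theta_\tau=\sigma^{A_\tau}\times\mathbb R_{\ge0}^{B_\tau}\subseteq\mathbb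 R^{A_\tau\cup B_\tau}$, where $\sigma^A=\{u\in\mathbb R^A_{\ge0}:\sum_{v}u_v=1\}$, and $\Theta_\tau$ is glued to $\Theta_\eta$ along the common face $\Theta_{\tau\cap\eta}$ (indexed by $A_\tau\cap A_\eta$, $B_\tau\cap B_\eta$), $\Theta_\sigma\subseteq\Theta_\tau$ being the face where the coordinates outside $A_\sigma\cup B_\sigma$ vanish; this gives $|\Delta(\mathscr X,\mathcal H)|$. The slope near infinity of a piecewise affine $F$ along $\{p+tw\}$ is $\frac{d}{dt}F(p+tw)$ for $t\gg0$. Tropicalization. For $u\in\Theta_\tau$, choose local equations $z_v$ ($v\in A_\tau$) of $Z_v$ and $w_\rho$ ($\rho\in B_\tau$) of $W_\rho$ at $\xi_\tau$; every $f$ in the completion $\widehat{\mathcal O}_{\mathscr X,\xi_\tau}$ has an admissible expansion $f=\sum_{m\in\mathbb Z_{\ge0}^{A_\tau\cup B_\tau}}a_m\prod z_v^{m_v}\prod w_\rho^{m_\rho}$ with each $a_m$ zero or a unit, and $\nu_u(f)=\min\{\sum_v u_vm_v+\sum_\rho u_\rho m_\rho: a_m\neq0\}$ is independent of choices, extends to a valuation on $\operatorname{Rat}(X)$ extending $\nu_K$, and is compatible with faces. Set $\operatorname{trop}(f)(u)=\nu_u(f)$. *)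

theory Defs
  imports "HOL-Analysis.Analysis"
begin

text \<open>Coordinates are indexed by V_f + V_infinity: Inl v for v in V_f, Inr rho for rho in V_infinity.
  A cell tau is given by the pair (A_tau, B_tau); all cells are realised in the
  common ambient space of functions ('v + 'r) => real, where the gluing along common
  faces becomes set-theoretic intersection.\<close>

type_synonym ('v, 'r) pt = "('v + 'r) \<Rightarrow> real"

definition cell_coords :: "'v set \<times> 'r set \<Rightarrow> ('v + 'r) set" where
  "cell_coords c = Inl ` fst c \<union> Inr ` snd c"

text \<open>Theta_tau = sigma^{A_tau} x R_{>=0}^{B_tau}, coordinates outside A_tau, B_tau vanish.\<close>
definition Theta :: "'v set \<times> 'r set \<Rightarrow> ('v, 'r) pt set" where
  "Theta c = {u. (\<forall>x. 0 \<le> u x) \<and> (\<forall>x. x \<notin> cell_coords c \<longrightarrow> u x = 0)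
                 \<and> (\<Sum>v\<in>fst c. u (Inl v)) = 1}"

definition dual_complex :: "'v set \<Rightarrow> 'r set \<Rightarrow> ('v set \<times> 'r set) set \<Rightarrow> bool" where
  "dual_complex Vf Vinf C \<longleftrightarrow> finite Vf \<and> finite Vinf \<and>
     (\<forall>(A,B)\<in>C. A \<noteq> {} \<and> A \<subseteq> Vf \<and> B \<subseteq> Vinf) \<and>
     (\<forall>(A,B)\<in>C. \<forall>A' B'. A' \<noteq> {} \<and> A' \<subseteq> A \<and> B' \<subseteq> B \<longrightarrow> (A',B') \<in> C)"

definition pairing :: "('v + 'r) set \<Rightarrow> ('v, 'r) pt \<Rightarrow> (('v + 'r) \<Rightarrow> nat) \<Rightarrow> real" where
  "pairing I u m = (\<Sum>x\<in>I. u x * real (m x))"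

text \<open>F is the tropicalization trop(f) of a rational function f = g/h on the cell c:
  with admissible expansions of g and h at xi_c, nu_u(g) (resp. nu_u(h)) is the minimum of
  the pairings of u with the (finitely many minimal) exponents m having a_m nonzero.\<close>
definition trop_on_cell :: "(('v, 'r) pt \<Rightarrow> real) \<Rightarrow> 'v set \<times> 'r set \<Rightarrow> bool" where
  "trop_on_cell F c \<longleftrightarrow> (\<exists>M1 M2.
      finite M1 \<and> M1 \<noteq> {} \<and> finite M2 \<and> M2 \<noteq> {} \<and>
      (\<forall>m\<in>M1 \<union> M2. \<forall>x. x \<notin> cell_coords c \<longrightarrow> m x = 0) \<and>
      (\<forall>u\<in>Theta c. F u = Min (pairing (cell_coords c) u ` M1)
                             - Min (pairing (cell_coords c) u ` M2)))"

definition concave_on_cell :: "(('v, 'r) pt \<Rightarrow> real) \<Rightarrow> ('v, 'r) pt set \<Rightarrow> bool" where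
  "concave_on_cell F S \<longleftrightarrow> (\<forall>x\<in>S. \<forall>y\<in>S. \<forall>a::real. 0 \<le> a \<and> a \<le> 1 \<longrightarrow>
      (1 - a) * F x + a * F y \<le> F (\<lambda>i. (1 - a) * x i + a * y i))"

definition slope_at_infinity :: "(('v, 'r) pt \<Rightarrow> real) \<Rightarrow> ('v, 'r) pt \<Rightarrow> ('v, 'r) pt \<Rightarrow> real \<Rightarrow> bool" where
  "slope_at_infinity F p w s \<longleftrightarrow>
     (\<forall>\<^sub>F t in at_top. ((\<lambda>t. F (\<lambda>i. p i + t * w i)) has_real_derivative s) (at t))"

definition unit_vec :: "'r \<Rightarrow> ('v, 'r) pt" where
  "unit_vec \<rho> = (\<lambda>x. if x = Inr \<rho> then 1 else 0)"

end

theory Submission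
  imports Defs
begin

text \<open>Along a half-line of a cell, trop(f) is a difference of minima of finitely many affine
  functions, hence affine for large t. Write the direction w as v + c e_\<rho> with c > 0 and
  v \<ge> 0. By concavity, trop(f)(p + t w) is at least the mean of its values at p + 2t v and
  p + 2ct e_\<rho>; the first is \<ge> 0 by (i) and (ii), so the slope along w is at least c times
  the (positive) slope along e_\<rho>.\<close>

lemma eventually_min_affine:
  fixes a1 b1 a2 b2 :: real
  shows "\<exists>\<alpha> \<beta>. \<forall>\<^sub>F t in at_top. min (a1 + t * b1) (a2 + t * b2) = \<alpha> + \<beta> * t"
proof -
  have eventually_le: "\<forall>\<^sub>F t in at_top. a + t * b \<le> a' + t * b'"
    if "b < b'" for a b a' b' :: real
    using eventually_gt_at_top[of "(a - a') / (b' - b)"]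
    by eventually_elim (use that in \<open>simp add: field_simps\<close>)
  consider "b1 < b2" | "b2 < b1" | "b1 = b2" by linarith
  then show ?thesis
  proof cases
    case 1
    have "\<forall>\<^sub>F t in at_top. min (a1 + t * b1) (a2 + t * b2) = a1 + b1 * t"
      using eventually_le[OF 1, of a1 a2]
      by (auto elim!: eventually_mono simp: mult.commute)
    then show ?thesis by blast
  next
    case 2
    have "\<forall>\<^sub>F t in at_top. min (a1 + t * b1) (a2 + t * b2) = a2 + b2 * t"
      using eventually_le[OF 2, of a2 a1]
      by (auto elim!: eventually_mono simp: mult.commute)
    then show ?thesis by blast
  next
    case 3
    then have "\<forall>\<^sub>F t in at_top. min (a1 + t * b1) (a2 + t * b2) = min a1 a2 + b1 * t"
      by (simp add: min_def)
    then show ?thesis by blast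
  qed
qed

lemma eventually_Min_affine:
  fixes a b :: "'m \<Rightarrow> real"
  assumes "finite M" "M \<noteq> {}"
  shows "\<exists>\<alpha> \<beta>. \<forall>\<^sub>F t in at_top. Min ((\<lambda>m. a m + t * b m) ` M) = \<alpha> + \<beta> * t"
  using assms
proof (induction M rule: finite_ne_induct)
  case (singleton m)
  show ?case by (rule exI[of _ "a m"], rule exI[of _ "b m"]) (simp add: mult.commute)
next
  case (insert m M)
  obtain \<alpha> \<beta> where IH: "\<forall>\<^sub>F t in at_top. Min ((\<lambda>m. a m + t * b m) ` M) = \<alpha> + \<beta> * t"
    using insert.IH by blast
  obtain \<alpha>' \<beta>' where min: "\<forall>\<^sub>F t in at_top. min (a m + t * b m) (\<alpha> + t * \<beta>) = \<alpha>' + \<beta>' * t"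
    using eventually_min_affine by blast
  have "\<forall>\<^sub>F t in at_top. Min ((\<lambda>m. a m + t * b m) ` insert m M) = \<alpha>' + \<beta>' * t"
    using IH min by eventually_elim (use insert.hyps in \<open>simp add: mult.commute\<close>)
  then show ?case by blast
qed

lemma pairing_ray: "pairing I (\<lambda>i. p i + t * w i) m = pairing I p m + t * pairing I w m"
  unfolding pairing_def by (simp add: algebra_simps sum.distrib sum_distrib_left)

lemma trop_on_cell_eventually_affine:
  assumes "trop_on_cell F \<eta>" and ray: "\<forall>t\<ge>0. (\<lambda>i. p i + t * w i) \<in> Theta \<eta>"
  shows "\<exists>\<alpha> \<beta>. \<forall>\<^sub>F t in at_top. F (\<lambda>i. p i + t * w i) = \<alpha> + \<beta> * t"
proof -
  let ?I = "cell_coords \<eta>"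
  let ?val = "\<lambda>M t. Min ((\<lambda>m. pairing ?I p m + t * pairing ?I w m) ` M)"
  obtain M1 M2 where M: "finite M1" "M1 \<noteq> {}" "finite M2" "M2 \<noteq> {}"
    and F: "\<forall>u\<in>Theta \<eta>. F u = Min (pairing ?I u ` M1) - Min (pairing ?I u ` M2)"
    using assms(1) unfolding trop_on_cell_def by (elim exE conjE) (rule that; assumption)
  obtain \<alpha>1 \<beta>1 where "\<forall>\<^sub>F t in at_top. ?val M1 t = \<alpha>1 + \<beta>1 * t"
    using eventually_Min_affine[OF M(1,2)] by blast
  moreover obtain \<alpha>2 \<beta>2 where "\<forall>\<^sub>F t in at_top. ?val M2 t = \<alpha>2 + \<beta>2 * t"
    using eventually_Min_affine[OF M(3,4)] by blast
  moreover have "\<forall>\<^sub>F t in at_top. F (\<lambda>i. p i + t * w i) = ?val M1 t - ?val M2 t"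
    using eventually_ge_at_top[of 0]
    by eventually_elim (use F ray in \<open>simp add: pairing_ray image_image\<close>)
  ultimately have "\<forall>\<^sub>F t in at_top. F (\<lambda>i. p i + t * w i) = (\<alpha>1 - \<alpha>2) + (\<beta>1 - \<beta>2) * t"
    by eventually_elim (simp add: algebra_simps)
  then show ?thesis by blast
qed

lemma eventually_affine_has_real_derivative:
  assumes "\<forall>\<^sub>F t in at_top. g t = \<alpha> + \<beta> * t"
  shows "\<forall>\<^sub>F t in at_top. (g has_real_derivative \<beta>) (at t)"
proof -
  obtain N where N: "\<And>t. t \<ge> N \<Longrightarrow> g t = \<alpha> + \<beta> * t"
    using assms unfolding eventually_at_top_linorder by blast
  have deriv: "(g has_real_derivative \<beta>) (at t)" if "t > N" for t
  proof (rule has_field_derivative_transform_within_open[where S="{N<..}"])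
    show "((\<lambda>t. \<alpha> + \<beta> * t) has_real_derivative \<beta>) (at t)"
      by (auto intro!: derivative_eq_intros)
  qed (use that N in auto)
  show ?thesis
    using eventually_gt_at_top[of N] by eventually_elim (rule deriv)
qed

lemma slope_at_infinity_eq_affine_slope:
  assumes "slope_at_infinity F p w s"
    and "\<forall>\<^sub>F t in at_top. F (\<lambda>i. p i + t * w i) = \<alpha> + \<beta> * t"
  shows "s = \<beta>"
proof -
  obtain t where "((\<lambda>t. F (\<lambda>i. p i + t * w i)) has_real_derivative s) (at t)"
    and "((\<lambda>t. F (\<lambda>i. p i + t * w i)) has_real_derivative \<beta>) (at t)"
    using eventually_happens'[OF trivial_limit_at_top_linorder eventually_conj[OF
        assms(1)[unfolded slope_at_infinity_def] eventually_affine_has_real_derivative[OF assms(2)]]]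
    by blast
  then show ?thesis by (rule DERIV_unique)
qed

lemma eventually_affine_le_imp_slope_le:
  fixes a b a' b' :: real
  assumes "\<forall>\<^sub>F t in at_top. a + b * t \<le> a' + b' * t"
  shows "b \<le> b'"
proof (rule ccontr)
  assume "\<not> b \<le> b'"
  then have "\<forall>\<^sub>F t in at_top. a' + b' * t < a + b * t"
    using eventually_gt_at_top[of "(a' - a) / (b - b')"]
    by (auto elim!: eventually_mono simp: field_simps)
  then obtain t where "a + b * t \<le> a' + b' * t" "a' + b' * t < a + b * t"
    using eventually_happens'[OF trivial_limit_at_top_linorder eventually_conj[OF assms]] by blast
  then show False by linarith
qed

lemma Theta_add_ray:
  assumes "p \<in> Theta \<eta>" "\<forall>x. 0 \<le> v x" "\<forall>x. x \<notin> Inr ` snd \<eta> \<longrightarrow> v x = 0" "t \<ge> 0"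
  shows "(\<lambda>i. p i + t * v i) \<in> Theta \<eta>"
proof -
  have "v (Inl a) = 0" for a using assms(3) by auto
  then show ?thesis using assms unfolding Theta_def cell_coords_def by auto
qed

lemma concave_nonneg_slope_lower_bound:
  assumes conc: "concave_on_cell F S" and nonneg: "\<forall>u\<in>S. 0 \<le> F u"
    and ray_v: "\<forall>t\<ge>0. (\<lambda>i. p i + t * v i) \<in> S"
    and ray_e: "\<forall>t\<ge>0. (\<lambda>i. p i + t * e i) \<in> S"
    and w: "\<And>i. w i = v i + c * e i" and "c > 0"
    and aff_w: "\<forall>\<^sub>F t in at_top. F (\<lambda>i. p i + t * w i) = \<alpha> + \<beta> * t"
    and aff_e: "\<forall>\<^sub>F t in at_top. F (\<lambda>i. p i + t * e i) = \<alpha>' + \<beta>' * t"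
  shows "c * \<beta>' \<le> \<beta>"
proof -
  have "filterlim (\<lambda>t. 2 * c * t) at_top at_top"
    using \<open>c > 0\<close> by (auto intro!: filterlim_tendsto_pos_mult_at_top filterlim_ident)
  from eventually_compose_filterlim[OF aff_e this]
  have aff_e': "\<forall>\<^sub>F t in at_top. F (\<lambda>i. p i + (2 * c * t) * e i) = \<alpha>' + \<beta>' * (2 * c * t)"
    by simp
  have "\<forall>\<^sub>F t in at_top. \<alpha>' / 2 + (c * \<beta>') * t \<le> \<alpha> + \<beta> * t"
    using aff_w aff_e' eventually_ge_at_top[of 0]
  proof eventually_elim
    case (elim t)
    let ?x = "\<lambda>i. p i + (2 * t) * v i" and ?y = "\<lambda>i. p i + (2 * c * t) * e i"
    have x: "?x \<in> S" and y: "?y \<in> S"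
      using ray_v ray_e elim(3) \<open>c > 0\<close> by simp_all
    have midpoint: "(\<lambda>i. (1 - 1/2) * ?x i + 1/2 * ?y i) = (\<lambda>i. p i + t * w i)"
      by (simp add: w algebra_simps)
    have "\<forall>a::real. 0 \<le> a \<and> a \<le> 1 \<longrightarrow>
        (1 - a) * F ?x + a * F ?y \<le> F (\<lambda>i. (1 - a) * ?x i + a * ?y i)"
      using conc x y unfolding concave_on_cell_def by blast
    from spec[OF this, of "1/2", unfolded midpoint]
    have "F ?x / 2 + F ?y / 2 \<le> F (\<lambda>i. p i + t * w i)"
      by simp
    moreover have "0 \<le> F ?x" using nonneg x by blast
    moreover have "\<beta>' * (2 * c * t) / 2 = (c * \<beta>') * t" by simp
    ultimately show ?case using elim(1,2) by linarith
  qed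
  then show ?thesis by (rule eventually_affine_le_imp_slope_le)
qed

lemma trop_slope_at_infinity_pos_if_split:
  assumes trop: "trop_on_cell F \<eta>" and conc: "concave_on_cell F (Theta \<eta>)"
    and nonneg: "\<forall>u\<in>Theta \<eta>. 0 \<le> F u"
    and ray_w: "\<forall>t\<ge>0. (\<lambda>i. p i + t * w i) \<in> Theta \<eta>"
    and ray_v: "\<forall>t\<ge>0. (\<lambda>i. p i + t * v i) \<in> Theta \<eta>"
    and ray_e: "\<forall>t\<ge>0. (\<lambda>i. p i + t * e i) \<in> Theta \<eta>"
    and w_split: "\<And>i. w i = v i + c * e i" and "c > 0"
    and slope_e: "slope_at_infinity F p e s" and "s > 0"
  shows "\<exists>s>0. slope_at_infinity F p w s"
proof -
  obtain \<alpha> \<beta> where aff_w: "\<forall>\<^sub>F t in at_top. F (\<lambda>i. p i + t * w i) = \<alpha> + \<beta> * t"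
    using trop_on_cell_eventually_affine[OF trop ray_w] by blast
  obtain \<alpha>' \<beta>' where aff_e: "\<forall>\<^sub>F t in at_top. F (\<lambda>i. p i + t * e i) = \<alpha>' + \<beta>' * t"
    using trop_on_cell_eventually_affine[OF trop ray_e] by blast
  have "c * \<beta>' \<le> \<beta>"
    by (rule concave_nonneg_slope_lower_bound[OF conc nonneg ray_v ray_e w_split \<open>c > 0\<close> aff_w aff_e])
  moreover have "c * \<beta>' > 0"
    using slope_at_infinity_eq_affine_slope[OF slope_e aff_e] \<open>s > 0\<close> \<open>c > 0\<close> by simp
  moreover have "slope_at_infinity F p w \<beta>"
    unfolding slope_at_infinity_def by (rule eventually_affine_has_real_derivative[OF aff_w])
  ultimately show ?thesis by (metis order_less_le_trans)
qed

theorem corollary4p6: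
  fixes Vf :: "'v set" and Vinf :: "'r set" and C :: "('v set \<times> 'r set) set"
    and F :: "('v, 'r) pt \<Rightarrow> real" and \<tau> :: "'v set \<times> 'r set"
  assumes cx: "dual_complex Vf Vinf C"
    and tau: "\<tau> \<in> C"
    and trop: "\<forall>\<eta>\<in>C. trop_on_cell F \<eta>"
    and i: "\<forall>u\<in>Theta \<tau>. F u = 0"
    and ii: "\<forall>\<eta>\<in>C. \<forall>u\<in>Theta \<eta> - Theta \<tau>. F u > 0"
    and iii_conc: "\<forall>\<eta>\<in>C. concave_on_cell F (Theta \<eta>)"
    and iii_slope: "\<forall>\<eta>\<in>C. \<forall>\<rho>\<in>snd \<eta> - snd \<tau>. \<forall>u.
                      (\<forall>t\<ge>0. (\<lambda>i. u i + t * unit_vec \<rho> i) \<in> Theta \<eta>) \<longrightarrow>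
                      (\<exists>s>0. slope_at_infinity F u (unit_vec \<rho>) s)"
  shows "\<forall>\<eta>\<in>C. \<forall>p w.
           (\<forall>t\<ge>0. (\<lambda>i. p i + t * w i) \<in> Theta \<eta>) \<and>
           (\<forall>x. 0 \<le> w x) \<and> (\<forall>x. x \<notin> Inr ` snd \<eta> \<longrightarrow> w x = 0) \<and>
           (\<exists>\<rho>\<in>snd \<eta> - snd \<tau>. w (Inr \<rho>) > 0)
           \<longrightarrow> (\<exists>s>0. slope_at_infinity F p w s)"
proof (intro ballI allI impI, elim conjE bexE)
  fix \<eta> p w \<rho>
  assume \<eta>: "\<eta> \<in> C" and ray_w: "\<forall>t\<ge>0. (\<lambda>i. p i + t * w i) \<in> Theta \<eta>"
    and w_nonneg: "\<forall>x. 0 \<le> w x" and w_supp: "\<forall>x. x \<notin> Inr ` snd \<eta> \<longrightarrow> w x = 0"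
    and \<rho>: "\<rho> \<in> snd \<eta> - snd \<tau>" and c_pos: "w (Inr \<rho>) > 0"
  define c where "c = w (Inr \<rho>)"
  define v where "v = (\<lambda>i. w i - c * unit_vec \<rho> i)"
  have "c > 0" using c_pos by (simp add: c_def)
  have w_split: "w i = v i + c * unit_vec \<rho> i" for i by (simp add: v_def)
  have p: "p \<in> Theta \<eta>" using ray_w[rule_format, of 0] by simp
  have ray_e: "\<forall>t\<ge>0. (\<lambda>i. p i + t * unit_vec \<rho> i) \<in> Theta \<eta>"
    using Theta_add_ray[OF p] \<rho> by (auto simp: unit_vec_def)
  have ray_v: "\<forall>t\<ge>0. (\<lambda>i. p i + t * v i) \<in> Theta \<eta>"
    using Theta_add_ray[OF p] w_nonneg w_supp by (auto simp: v_def c_def unit_vec_def)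
  obtain s where "s > 0" and slope_e: "slope_at_infinity F p (unit_vec \<rho>) s"
    using iii_slope \<eta> \<rho> ray_e by blast
  have nonneg: "\<forall>u\<in>Theta \<eta>. 0 \<le> F u"
    using i ii[rule_format, OF \<eta>] by (metis DiffI less_imp_le order_refl)
  show "\<exists>s>0. slope_at_infinity F p w s"
    by (rule trop_slope_at_infinity_pos_if_split[OF trop[rule_format, OF \<eta>]
          iii_conc[rule_format, OF \<eta>] nonneg ray_w ray_v ray_e w_split \<open>c > 0\<close> slope_e \<open>s > 0\<close>])
qed

end
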